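(* Let $r(x;m)$, $x\in\mathbb C^*$, $m=0,1,2,\ldots$, be functions satisfying $r(x;0)=1$ identically and $r(qx;m)=\sum_{i=0}^m(-1)^i\binom{m}{i}r(x;m-i)$ for all $x$ and $m$. For $n\ge1$ define $$R(t_1,\ldots,t_n\,|\,t_0)=\sum_{\gamma\in\Gamma_n}(-1)^{n+\ell(\gamma)}\prod_{k=1}^{\ell(\gamma)}r\Big(\prod_{i\in\upsilon(\gamma)_k}t_i\,;\,\#\gamma_k\Big),\qquad \upsilon(\gamma)_k=\{0\}\cup\gamma_1\cup\cdots\cup\gamma_{k-1}.$$ Then $$R(qt_1,t_2,\ldots,t_n\,|\,t_0)=\sum_{\pi\in\Pi^\circ_n}(-1)^{n+\ell(\pi)}R^\pi(t_1,\ldots,t_n\,|\,t_0),$$ where for $\pi=\{\pi_1,\ldots,\pi_\ell\}$, $R^\pi(t\,|\,t_0)=R\big(\prod_{k\in\pi_1}t_k,\ldots,\prod_{k\in\pi_\ell}t_k\,\big|\,t_0\big)$.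
   Context: $q$ is a fixed nonzero complex number and $t_0$ an auxiliary variable. $\Gamma_n$ is the set of compositions of $\{1,\ldots,n\}$: ordered tuples $\gamma=(\gamma_1,\ldots,\gamma_\ell)$ of nonempty, pairwise disjoint subsets with union $\{1,\ldots,n\}$; $\ell(\gamma)=\ell$. $\Pi_n$ is the set of (unordered) set partitions $\pi=\{\pi_1,\ldots,\pi_\ell\}$ of $\{1,\ldots,n\}$ into nonempty blocks, $\ell(\pi)=\ell$. $\Pi^\circ_n\subset\Pi_n$ consists of partitions having at most one block of cardinality $>1$, such a block (if present) containing $1$. ($R$ is symmetric in $t_1,\ldots,t_n$, so $R^\pi$ does not depend on the ordering of blocks.) *)

theory Defs
  imports Complex_Main "HOL-Library.Disjoint_Sets"
begin

definition compositions :: "nat \<Rightarrow> nat set list set" where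
  "compositions n = {\<gamma>. (\<forall>b\<in>set \<gamma>. b \<noteq> {}) \<and>
      (\<forall>i<length \<gamma>. \<forall>j<length \<gamma>. i \<noteq> j \<longrightarrow> \<gamma> ! i \<inter> \<gamma> ! j = {}) \<and>
      \<Union>(set \<gamma>) = {1..n}}"

definition set_partitions :: "nat \<Rightarrow> nat set set set" where
  "set_partitions n = {\<pi>. partition_on {1..n} \<pi>}"

definition set_partitions_circ :: "nat \<Rightarrow> nat set set set" where
  "set_partitions_circ n = {\<pi> \<in> set_partitions n.
      (\<forall>b\<in>\<pi>. \<forall>c\<in>\<pi>. card b > 1 \<and> card c > 1 \<longrightarrow> b = c) \<and>
      (\<forall>b\<in>\<pi>. card b > 1 \<longrightarrow> 1 \<in> b)}"

text \<open>The k-th block (0-indexed) of \<gamma> gets argument prod over {0} \<union> \<gamma>_0 \<union> ... \<union> \<gamma>_(k-1).\<close>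
definition Rfun :: "(complex \<Rightarrow> nat \<Rightarrow> complex) \<Rightarrow> nat \<Rightarrow> (nat \<Rightarrow> complex) \<Rightarrow> complex \<Rightarrow> complex" where
  "Rfun r n t t0 = (\<Sum>\<gamma>\<in>compositions n.
      (-1) ^ (n + length \<gamma>) *
      (\<Prod>k<length \<gamma>. r (\<Prod>i\<in>insert 0 (\<Union>(set (take k \<gamma>))). (if i = 0 then t0 else t i))
                        (card (\<gamma> ! k))))"

text \<open>R^\<pi>: blocks of \<pi> are ordered by their minimum element (R is symmetric, so the
  ordering is immaterial); the j-th variable (j = 1..card \<pi>) is the product of t over the j-th block.\<close>
definition Rpart :: "(complex \<Rightarrow> nat \<Rightarrow> complex) \<Rightarrow> nat set set \<Rightarrow> (nat \<Rightarrow> complex) \<Rightarrow> complex \<Rightarrow> complex" where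
  "Rpart r \<pi> t t0 = (let bs = sorted_key_list_of_set Min \<pi> in
      Rfun r (card \<pi>) (\<lambda>j. \<Prod>k\<in>bs ! (j - 1). t k) t0)"

end

theory Submission
  imports Defs
begin

text \<open>
  With \<open>r(c;0) = 1\<close>, the function \<open>R\<close> is determined by its first-block recursion
  \<open>\<Sum>B\<subseteq>X. (-1)^|B| r(c;|B|) R(t_(X-B) | c t_B) = 0\<close> for nonempty index sets \<open>X\<close>:
  any family satisfying it coincides with \<open>R\<close>.  The hypothesis on \<open>r\<close> says that
  \<open>(-1)^m r(qc;m)\<close> is the binomial transform of \<open>(-1)^m r(c;m)\<close>; together with Moebius
  inversion on the subset lattice this shows that scaling the base point gives
  \<open>R(t_X | q c) = \<Sum>Y\<subseteq>X. (-1)^|Y| R(t_(X-Y) | c t_Y)\<close>.  Scaling one variable \<open>t_a\<close> by \<open>q\<close>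
  only affects first blocks containing \<open>a\<close>, and the right-hand side, a signed sum of \<open>R\<close>
  over the partitions \<open>{B} \<union> singletons\<close> with \<open>a \<in> B\<close>, satisfies the same recursion: the
  two kinds of terms cancel under the involution \<open>(S, C) \<mapsto> ({a} \<union> C, S - {a})\<close>.
  For \<open>a = 1\<close> these partitions are exactly \<open>\<Pi>\<^sup>\<circ>\<^sub>n\<close>.
\<close>

section \<open>Sums over subsets of a finite set\<close>

lemma sum_Pow_card:
  assumes "finite S"
  shows "(\<Sum>D\<in>Pow S. f (card D)) = (\<Sum>k\<le>card S. of_nat (card S choose k) * f k)"
proof -
  have "(\<Sum>D\<in>Pow S. f (card D)) = (\<Sum>k\<le>card S. \<Sum>D | D \<in> Pow S \<and> card D = k. f (card D))"
    using assms by (intro sum.group[symmetric]) (auto intro: card_mono)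
  also have "\<dots> = (\<Sum>k\<le>card S. of_nat (card S choose k) * f k)"
  proof (intro sum.cong refl)
    fix k
    have "{D. D \<in> Pow S \<and> card D = k} = {D. D \<subseteq> S \<and> card D = k}" by auto
    then show "(\<Sum>D | D \<in> Pow S \<and> card D = k. f (card D)) = of_nat (card S choose k) * f k"
      using n_subsets[OF assms, of k] by simp
  qed
  finally show ?thesis .
qed

lemma sum_Pow_neg_one_pow:
  assumes "finite S"
  shows "(\<Sum>D\<in>Pow S. (-1::'a::comm_ring_1) ^ card D) = (if S = {} then 1 else 0)"
  using assms choose_alternating_sum[of "card S", where 'a = 'a]
  by (auto simp: sum_Pow_card mult.commute card_gt_0_iff)

lemma sum_supsets_neg_one_pow:
  assumes "finite Z"
  shows "(\<Sum>B | V \<subseteq> B \<and> B \<subseteq> Z. (-1::'a::comm_ring_1) ^ card (Z - B)) = (if V = Z then 1 else 0)"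
proof (cases "V \<subseteq> Z")
  case True
  have "(\<Sum>B | V \<subseteq> B \<and> B \<subseteq> Z. (-1::'a) ^ card (Z - B)) = (\<Sum>D\<in>Pow (Z - V). (-1) ^ card D)"
    by (rule sum.reindex_bij_witness[where i = "\<lambda>D. Z - D" and j = "\<lambda>B. Z - B"]) (use True in auto)
  then show ?thesis using assms True by (auto simp: sum_Pow_neg_one_pow)
next
  case False
  then have "{B. V \<subseteq> B \<and> B \<subseteq> Z} = {}" by blast
  then show ?thesis using False by (simp only: sum.empty) auto
qed

lemma sum_Pow_Diff_regroup:
  assumes "finite X" "A \<subseteq> Pow X"
  shows "(\<Sum>B\<in>A. \<Sum>Y\<in>Pow (X - B). f B Y) = (\<Sum>Z\<in>Pow X. \<Sum>B | B \<in> A \<and> B \<subseteq> Z. f B (Z - B))"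
proof -
  have Diff_disjoint_self: "Y - B = Y" if "Y \<subseteq> X - B" for B Y
    using that by blast
  have "finite A" using assms(1) by (rule finite_subset[OF assms(2), simplified])
  then have "(\<Sum>B\<in>A. \<Sum>Y\<in>Pow (X - B). f B Y) = (\<Sum>(B, Y)\<in>(SIGMA B:A. Pow (X - B)). f B Y)"
    using assms(1) by (intro sum.Sigma) auto
  also have "\<dots> = (\<Sum>(Z, B)\<in>(SIGMA Z:Pow X. {B. B \<in> A \<and> B \<subseteq> Z}). f B (Z - B))"
    by (rule sum.reindex_bij_witness[where i = "\<lambda>(Z, B). (B, Z - B)" and j = "\<lambda>(B, Y). (B \<union> Y, B)"])
       (use assms(2) in \<open>auto simp: Un_Diff Diff_disjoint_self\<close>)
  also have "\<dots> = (\<Sum>Z\<in>Pow X. \<Sum>B | B \<in> A \<and> B \<subseteq> Z. f B (Z - B))"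
    using \<open>finite A\<close> assms(1) by (intro sum.Sigma[symmetric]) auto
  finally show ?thesis .
qed

lemma sum_supsets_alternating:
  fixes H :: "'a set \<Rightarrow> 'b::comm_ring_1"
  assumes "finite X" "V \<subseteq> X"
  shows "(\<Sum>B | V \<subseteq> B \<and> B \<subseteq> X. \<Sum>Y\<in>Pow (X - B). (-1) ^ card Y * H (B \<union> Y)) = H V"
proof -
  have "(\<Sum>B | V \<subseteq> B \<and> B \<subseteq> X. \<Sum>Y\<in>Pow (X - B). (-1) ^ card Y * H (B \<union> Y)) =
        (\<Sum>Z\<in>Pow X. \<Sum>B | V \<subseteq> B \<and> B \<subseteq> Z. (-1) ^ card (Z - B) * H Z)"
    using assms by (subst sum_Pow_Diff_regroup) (auto intro!: sum.cong simp: Un_absorb1)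
  also have "\<dots> = (\<Sum>Z\<in>Pow X. if V = Z then H Z else 0)"
    using assms(1) by (intro sum.cong refl) (auto simp: sum_distrib_right[symmetric] sum_supsets_neg_one_pow finite_subset)
  also have "\<dots> = H V"
    using assms by simp
  finally show ?thesis .
qed

lemma sum_Pow_swap_subset:
  assumes "finite Y"
  shows "(\<Sum>B\<in>Pow Y. \<Sum>V\<in>Pow B. h V B) = (\<Sum>V\<in>Pow Y. \<Sum>B | V \<subseteq> B \<and> B \<subseteq> Y. h V B)"
proof -
  have "(\<Sum>B\<in>Pow Y. \<Sum>V\<in>Pow B. h V B) = (\<Sum>B\<in>Pow Y. \<Sum>V | V \<in> Pow Y \<and> V \<subseteq> B. h V B)"
    by (intro sum.cong refl) auto
  also have "\<dots> = (\<Sum>V\<in>Pow Y. \<Sum>B | B \<in> Pow Y \<and> V \<subseteq> B. h V B)"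
    using assms by (intro sum.swap_restrict) auto
  finally show ?thesis
    by (simp add: conj_commute)
qed

lemma sum_disjoint_subsets_swap:
  assumes "finite Y"
  shows "(\<Sum>S | P S \<and> S \<subseteq> Y. \<Sum>B | Q B \<and> B \<subseteq> Y - S. h S B) =
         (\<Sum>B | Q B \<and> B \<subseteq> Y. \<Sum>S | P S \<and> S \<subseteq> Y - B. h S B)"
proof -
  have "(\<Sum>S | P S \<and> S \<subseteq> Y. \<Sum>B | Q B \<and> B \<subseteq> Y - S. h S B) =
        (\<Sum>S | P S \<and> S \<subseteq> Y. \<Sum>B | B \<in> {B. Q B \<and> B \<subseteq> Y} \<and> S \<inter> B = {}. h S B)"
    by (intro sum.cong refl) auto
  also have "\<dots> = (\<Sum>B | Q B \<and> B \<subseteq> Y. \<Sum>S | S \<in> {S. P S \<and> S \<subseteq> Y} \<and> S \<inter> B = {}. h S B)"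
    using assms by (intro sum.swap_restrict) auto
  also have "\<dots> = (\<Sum>B | Q B \<and> B \<subseteq> Y. \<Sum>S | P S \<and> S \<subseteq> Y - B. h S B)"
    by (intro sum.cong refl) auto
  finally show ?thesis .
qed

lemma sum_marked_pairs_swap:
  assumes "finite Y"
  shows "(\<Sum>S | a \<in> S \<and> S \<subseteq> Y. \<Sum>C\<in>Pow (Y - S). f (card S) (S \<union> C)) =
         (\<Sum>B | a \<in> B \<and> B \<subseteq> Y. \<Sum>C\<in>Pow (Y - B). f (card C + 1) (B \<union> C))"
proof -
  let ?P = "SIGMA S:{S. a \<in> S \<and> S \<subseteq> Y}. Pow (Y - S)"
  define sw where "sw = (\<lambda>(S, C). (insert a C, S - {a}))"
  have sw: "sw (sw p) = p" "sw p \<in> ?P"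
    "(\<lambda>(B, C). f (card C + 1) (B \<union> C)) (sw p) = (\<lambda>(S, C). f (card S) (S \<union> C)) p"
    if "p \<in> ?P" for p
  proof -
    obtain S C where p: "p = (S, C)" by fastforce
    then have "a \<in> S" "S \<subseteq> Y" "C \<subseteq> Y - S" using that by auto
    moreover have "finite S" "finite C" using calculation assms by (auto intro: finite_subset)
    ultimately have "card S = card (S - {a}) + 1" "insert a C \<union> (S - {a}) = S \<union> C"
      using card.remove[of S a] by auto
    with p \<open>a \<in> S\<close> \<open>S \<subseteq> Y\<close> \<open>C \<subseteq> Y - S\<close> \<open>finite C\<close>
    show "sw (sw p) = p" "sw p \<in> ?P"
      "(\<lambda>(B, C). f (card C + 1) (B \<union> C)) (sw p) = (\<lambda>(S, C). f (card S) (S \<union> C)) p"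
      by (auto simp: sw_def insert_absorb)
  qed
  have "(\<Sum>(S, C)\<in>?P. f (card S) (S \<union> C)) = (\<Sum>(B, C)\<in>?P. f (card C + 1) (B \<union> C))"
    by (rule sum.reindex_bij_witness[where i = sw and j = sw]) (use sw in auto)
  moreover have "finite {S. a \<in> S \<and> S \<subseteq> Y}" using assms by (auto intro: finite_subset[of _ "Pow Y"])
  ultimately show ?thesis
    using assms by (simp add: sum.Sigma)
qed

lemma sum_Pow_split_mem:
  assumes "finite Y"
  shows "sum h (Pow Y) = sum h {S. a \<notin> S \<and> S \<subseteq> Y} + sum h {S. a \<in> S \<and> S \<subseteq> Y}"
proof -
  have "Pow Y = {S. a \<notin> S \<and> S \<subseteq> Y} \<union> {S. a \<in> S \<and> S \<subseteq> Y}" by auto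
  then show ?thesis
    using assms by (simp only:) (intro sum.union_disjoint; auto intro: finite_subset[of _ "Pow Y"])
qed

lemma card_Un_subset_Diff:
  "finite Y \<Longrightarrow> S \<subseteq> Y \<Longrightarrow> C \<subseteq> Y - S \<Longrightarrow> card (S \<union> C) = card S + card C"
  by (subst card_Un_disjoint) (auto intro: finite_subset)

lemma prod_fun_upd_scale:
  assumes "finite S" "a \<in> S"
  shows "prod (g(a := q * g a)) S = q * prod g S"
proof -
  have "prod (g(a := q * g a)) (S - {a}) = prod g (S - {a})"
    by (intro prod.cong) auto
  then show ?thesis
    using prod.remove[OF assms, of g] prod.remove[OF assms, of "g(a := q * g a)"] by (simp add: ac_simps)
qed

section \<open>Compositions of a finite set\<close>

definition compositions_of :: "'a set \<Rightarrow> 'a set list set" where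
  "compositions_of X = {\<gamma>. (\<forall>b\<in>set \<gamma>. b \<noteq> {}) \<and>
      (\<forall>i<length \<gamma>. \<forall>j<length \<gamma>. i \<noteq> j \<longrightarrow> \<gamma> ! i \<inter> \<gamma> ! j = {}) \<and> \<Union>(set \<gamma>) = X}"

lemma nth_disjoint_Cons_iff:
  "(\<forall>i<length (B # \<gamma>). \<forall>j<length (B # \<gamma>). i \<noteq> j \<longrightarrow> (B # \<gamma>) ! i \<inter> (B # \<gamma>) ! j = {}) \<longleftrightarrow>
   (\<forall>b\<in>set \<gamma>. B \<inter> b = {}) \<and> (\<forall>i<length \<gamma>. \<forall>j<length \<gamma>. i \<noteq> j \<longrightarrow> \<gamma> ! i \<inter> \<gamma> ! j = {})"
  by (simp add: All_less_Suc2 all_set_conv_all_nth Int_commute) blast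

lemma Cons_in_compositions_of_iff:
  "B # \<gamma> \<in> compositions_of X \<longleftrightarrow> B \<noteq> {} \<and> B \<subseteq> X \<and> \<gamma> \<in> compositions_of (X - B)"
  unfolding compositions_of_def mem_Collect_eq nth_disjoint_Cons_iff by auto

lemma compositions_of_empty [simp]: "compositions_of {} = {[]}"
  by (auto simp: compositions_of_def neq_Nil_conv)

lemma compositions_of_nonempty:
  assumes "X \<noteq> {}"
  shows "compositions_of X = (\<lambda>(B, \<gamma>). B # \<gamma>) ` (SIGMA B:{B. B \<subseteq> X \<and> B \<noteq> {}}. compositions_of (X - B))"
proof (intro set_eqI iffI)
  fix \<delta> assume "\<delta> \<in> compositions_of X"
  moreover have "\<delta> \<noteq> []" using calculation assms by (auto simp: compositions_of_def)
  ultimately show "\<delta> \<in> (\<lambda>(B, \<gamma>). B # \<gamma>) ` (SIGMA B:{B. B \<subseteq> X \<and> B \<noteq> {}}. compositions_of (X - B))"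
    by (auto simp: neq_Nil_conv Cons_in_compositions_of_iff)
qed (auto simp: Cons_in_compositions_of_iff)

lemma finite_compositions_of: "finite X \<Longrightarrow> finite (compositions_of X)"
proof (induction "card X" arbitrary: X rule: less_induct)
  case less
  show ?case
  proof (cases "X = {}")
    case False
    have "card (X - B) < card X" if "B \<subseteq> X" "B \<noteq> {}" for B
      using that less.prems by (intro psubset_card_mono) auto
    then have "finite (compositions_of (X - B))" if "B \<subseteq> X" "B \<noteq> {}" for B
      using that less by simp
    then show ?thesis
      unfolding compositions_of_nonempty[OF False] using less.prems
      by (intro finite_imageI finite_SigmaI) (auto intro: finite_subset[of _ "Pow X"])
  qed simp
qed

section \<open>The function \<open>R\<close> on a finite index set\<close>

(* Removing a first block from {1..n} leaves an arbitrary finite index set; c plays the role of t_0. *)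
definition Rset :: "('b::comm_ring_1 \<Rightarrow> nat \<Rightarrow> 'b) \<Rightarrow> ('a \<Rightarrow> 'b) \<Rightarrow> 'b \<Rightarrow> 'a set \<Rightarrow> 'b" where
  "Rset r g c X = (\<Sum>\<gamma>\<in>compositions_of X. (-1) ^ (card X + length \<gamma>) *
      (\<Prod>k<length \<gamma>. r (c * prod g (\<Union>(set (take k \<gamma>)))) (card (\<gamma> ! k))))"

lemma Rset_empty [simp]: "Rset r g c {} = 1"
  by (simp add: Rset_def)

lemma Union_take_composition_subset:
  "\<gamma> \<in> compositions_of X \<Longrightarrow> \<Union>(set (take k \<gamma>)) \<subseteq> X"
  using set_take_subset by (fastforce simp: compositions_of_def)

lemma Rset_rec:
  assumes "finite X" "X \<noteq> {}"
  shows "Rset r g c X = (\<Sum>B | B \<subseteq> X \<and> B \<noteq> {}.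
           (-1) ^ (card B + 1) * r c (card B) * Rset r g (c * prod g B) (X - B))"
proof -
  define T where "T c' (Y :: 'a set) \<gamma> = (-1) ^ (card Y + length \<gamma>) *
      (\<Prod>k<length \<gamma>. r (c' * prod g (\<Union>(set (take k \<gamma>)))) (card (\<gamma> ! k)))" for c' Y \<gamma>
  let ?\<Sigma> = "SIGMA B:{B. B \<subseteq> X \<and> B \<noteq> {}}. compositions_of (X - B)"
  have T_Cons: "T c X (B # \<gamma>) = (-1) ^ (card B + 1) * r c (card B) * T (c * prod g B) (X - B) \<gamma>"
    if "B \<subseteq> X" "\<gamma> \<in> compositions_of (X - B)" for B \<gamma>
  proof -
    have "finite B" using that(1) assms(1) by (rule rev_finite_subset[rotated])
    have "prod g (B \<union> \<Union>(set (take k \<gamma>))) = prod g B * prod g (\<Union>(set (take k \<gamma>)))" for k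
      using Union_take_composition_subset[OF that(2), of k] \<open>finite B\<close> assms(1)
      by (intro prod.union_disjoint) (auto intro: finite_subset)
    moreover have "card X = card B + card (X - B)"
      using that(1) assms(1) by (simp add: card_Diff_subset card_mono \<open>finite B\<close>)
    ultimately show ?thesis
      unfolding T_def by (simp only: length_Cons prod.lessThan_Suc_shift) (simp add: power_add mult_ac)
  qed
  have Rset_T: "Rset r g c' Y = sum (T c' Y) (compositions_of Y)" for c' Y
    by (simp add: Rset_def T_def)
  have "Rset r g c X = sum (T c X) (compositions_of X)"
    by (fact Rset_T)
  also have "\<dots> = (\<Sum>(B, \<gamma>)\<in>?\<Sigma>. T c X (B # \<gamma>))"
    unfolding compositions_of_nonempty[OF assms(2)]
    by (subst sum.reindex) (auto simp: inj_on_def case_prod_unfold)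
  also have "\<dots> = (\<Sum>B | B \<subseteq> X \<and> B \<noteq> {}. \<Sum>\<gamma>\<in>compositions_of (X - B). T c X (B # \<gamma>))"
    using assms(1) by (subst sum.Sigma) (auto intro: finite_subset[of _ "Pow X"] finite_compositions_of)
  also have "\<dots> = (\<Sum>B | B \<subseteq> X \<and> B \<noteq> {}.
           (-1) ^ (card B + 1) * r c (card B) * Rset r g (c * prod g B) (X - B))"
    by (intro sum.cong refl) (auto simp: Rset_T T_Cons sum_distrib_left intro!: sum.cong)
  finally show ?thesis .
qed

lemma Rset_alternating_sum:
  assumes "r c 0 = 1" "finite X" "X \<noteq> {}"
  shows "(\<Sum>B\<in>Pow X. (-1) ^ card B * r c (card B) * Rset r g (c * prod g B) (X - B)) = 0"
proof -
  have "Pow X = insert {} {B. B \<subseteq> X \<and> B \<noteq> {}}" by auto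
  moreover have "finite {B. B \<subseteq> X \<and> B \<noteq> {}}" using assms(2) by simp
  ultimately show ?thesis
    using assms by (simp add: Rset_rec[of X r g c] sum_negf)
qed

lemma Rset_reindex:
  assumes "finite X" "inj_on h X"
  shows "Rset r g c (h ` X) = Rset r (g \<circ> h) c X"
  using assms
proof (induction "card X" arbitrary: X c rule: less_induct)
  case less
  show ?case
  proof (cases "X = {}")
    case False
    let ?S = "{B. B \<subseteq> X \<and> B \<noteq> {}}"
    have subsets_image: "{B'. B' \<subseteq> h ` X \<and> B' \<noteq> {}} = image h ` ?S"
      by (auto simp: subset_image_iff)
    have "inj_on (image h) ?S"
      using inj_on_image_Pow[OF less.prems(2)] by (rule inj_on_subset) auto
    then have "Rset r g c (h ` X) = (\<Sum>B\<in>?S. (-1) ^ (card (h ` B) + 1) * r c (card (h ` B)) *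
            Rset r g (c * prod g (h ` B)) (h ` X - h ` B))"
      using less.prems False by (simp add: Rset_rec subsets_image sum.reindex)
    also have "\<dots> = (\<Sum>B\<in>?S. (-1) ^ (card B + 1) * r c (card B) *
            Rset r (g \<circ> h) (c * prod (g \<circ> h) B) (X - B))"
    proof (intro sum.cong refl)
      fix B assume B: "B \<in> ?S"
      have "inj_on h B" "inj_on h (X - B)" using less.prems(2) B by (auto intro: inj_on_subset)
      moreover have "h ` X - h ` B = h ` (X - B)" using inj_on_image_set_diff[OF less.prems(2)] B by auto
      moreover have "card (X - B) < card X" using less.prems(1) B by (intro psubset_card_mono) auto
      ultimately show "(-1) ^ (card (h ` B) + 1) * r c (card (h ` B)) * Rset r g (c * prod g (h ` B)) (h ` X - h ` B) =
          (-1) ^ (card B + 1) * r c (card B) * Rset r (g \<circ> h) (c * prod (g \<circ> h) B) (X - B)"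
        using less.hyps less.prems(1) by (simp add: card_image prod.reindex)
    qed
    also have "\<dots> = Rset r (g \<circ> h) c X" using Rset_rec[OF less.prems(1) False, of r "g \<circ> h" c] by simp
    finally show ?thesis .
  qed simp
qed

lemma Rset_shift_union:
  assumes "finite Y" "S \<subseteq> Y" "C \<subseteq> Y - S"
  shows "Rset r g (c * prod g S * prod g C) (Y - S - C) = Rset r g (c * prod g (S \<union> C)) (Y - (S \<union> C))"
proof -
  have "c * prod g S * prod g C = c * prod g (S \<union> C)"
    using assms by (subst prod.union_disjoint) (auto intro: finite_subset)
  moreover have "Y - S - C = Y - (S \<union> C)" by blast
  ultimately show ?thesis by (simp only:)
qed

lemma Rset_sum_supsets:
  assumes "finite Y" "V \<subseteq> Y"
  shows "(\<Sum>B | V \<subseteq> B \<and> B \<subseteq> Y. \<Sum>Z\<in>Pow (Y - B).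
            (-1) ^ card Z * Rset r g (c * prod g B * prod g Z) (Y - B - Z)) = Rset r g (c * prod g V) (Y - V)"
  using sum_supsets_alternating[OF assms, of "\<lambda>W. Rset r g (c * prod g W) (Y - W)"] assms(1)
  by (simp add: Rset_shift_union)

lemma Rset_unique:
  fixes F :: "'b::idom \<Rightarrow> 'a set \<Rightarrow> 'b"
  assumes X: "finite X" and g: "\<And>x. x \<in> X \<Longrightarrow> g x \<noteq> 0"
    and r0: "\<And>c. c \<noteq> 0 \<Longrightarrow> r c 0 = 1"
    and F_empty: "\<And>c. c \<noteq> 0 \<Longrightarrow> F c {} = 1"
    and F_sum: "\<And>c Y. c \<noteq> 0 \<Longrightarrow> Y \<subseteq> X \<Longrightarrow> Y \<noteq> {} \<Longrightarrow>
       (\<Sum>B\<in>Pow Y. (-1) ^ card B * r c (card B) * F (c * prod g B) (Y - B)) = 0"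
    and "c \<noteq> 0"
  shows "F c X = Rset r g c X"
proof -
  have "F c Y = Rset r g c Y" if "Y \<subseteq> X" "c \<noteq> 0" for Y c
    using that
  proof (induction "card Y" arbitrary: Y c rule: less_induct)
    case less
    show ?case
    proof (cases "Y = {}")
      case False
      have Y: "finite Y" using less.prems(1) X by (rule finite_subset)
      define d where "d B = F (c * prod g B) (Y - B) - Rset r g (c * prod g B) (Y - B)" for B
      have "d B = 0" if "B \<in> Pow Y - {{}}" for B
      proof -
        have "finite B" "\<forall>x\<in>B. g x \<noteq> 0"
          using that less.prems(1) g Y by (auto intro: finite_subset)
        then have "c * prod g B \<noteq> 0"
          using less.prems(2) by simp
        moreover have "card (Y - B) < card Y" using that Y by (intro psubset_card_mono) auto
        moreover have "Y - B \<subseteq> X" using less.prems(1) by blast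
        ultimately show ?thesis using less.hyps[of "Y - B"] less.prems(1) by (simp add: d_def)
      qed
      then have "(\<Sum>B\<in>Pow Y. (-1) ^ card B * r c (card B) * d B) = r c 0 * d {}"
        using Y by (simp add: sum.remove[of "Pow Y" "{}"])
      moreover have "(\<Sum>B\<in>Pow Y. (-1) ^ card B * r c (card B) * d B) = 0"
        using F_sum[OF less.prems(2,1) False] Rset_alternating_sum[of r c Y g] r0[OF less.prems(2)] Y False
        by (simp add: d_def right_diff_distrib sum_subtractf)
      ultimately show ?thesis using r0[OF less.prems(2)] by (simp add: d_def)
    qed (simp add: F_empty less.prems)
  qed
  then show ?thesis using \<open>c \<noteq> 0\<close> by simp
qed

section \<open>Partitions with one distinguished block\<close>

definition block_partition :: "'a set \<Rightarrow> 'a set \<Rightarrow> 'a set set" where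
  "block_partition X B = insert B ((\<lambda>x. {x}) ` (X - B))"

lemma card_block_partition:
  assumes "finite X"
  shows "card (block_partition X B) = card (X - B) + 1"
proof -
  have "B \<notin> (\<lambda>x. {x}) ` (X - B)" by auto
  with assms show ?thesis by (simp add: block_partition_def card_image inj_on_def)
qed

lemma partition_on_block_partition:
  "B \<subseteq> X \<Longrightarrow> B \<noteq> {} \<Longrightarrow> partition_on X (block_partition X B)"
  unfolding block_partition_def
  by (subst partition_on_insert) (auto simp: partition_on_singletons disjnt_def)

lemma inj_on_block_partition: "inj_on (block_partition X) {B. a \<in> B}"
proof (rule inj_onI)
  fix B1 B2 assume a: "B1 \<in> {B. a \<in> B}" "B2 \<in> {B. a \<in> B}"
    and eq: "block_partition X B1 = block_partition X B2"
  have "B1 \<in> block_partition X B2" unfolding eq[symmetric] by (simp add: block_partition_def)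
  with a show "B1 = B2" by (auto simp: block_partition_def)
qed

lemma partition_eq_block_partition:
  assumes P: "partition_on X \<pi>" and "finite X" and B: "B \<in> \<pi>"
    and small: "\<And>b. b \<in> \<pi> \<Longrightarrow> b \<noteq> B \<Longrightarrow> card b \<le> 1"
  shows "\<pi> = block_partition X B"
proof -
  have U: "\<Union>\<pi> = X" and ne: "{} \<notin> \<pi>" and dj: "disjoint \<pi>"
    using P by (auto simp: partition_on_def)
  have same: "b = B" if "b \<in> \<pi>" "x \<in> b" "x \<in> B" for b x
    using dj that B by (auto simp: pairwise_def disjnt_def)
  have singleton: "b = {x}" if "b \<in> \<pi>" "b \<noteq> B" "x \<in> b" for b x
  proof -
    have "finite b" using that(1) U \<open>finite X\<close> by (metis Union_upper finite_subset)
    then show ?thesis using small[OF that(1,2)] that(3) by (auto simp: card_le_Suc0_iff_eq)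
  qed
  show ?thesis
  proof
    show "\<pi> \<subseteq> block_partition X B"
    proof
      fix b assume b: "b \<in> \<pi>"
      show "b \<in> block_partition X B"
      proof (cases "b = B")
        case False
        have "b \<noteq> {}" using b ne by auto
        then obtain x where "x \<in> b" by blast
        then have "b = {x}" using singleton b False by blast
        moreover have "x \<in> X" using \<open>x \<in> b\<close> b U by blast
        moreover have "x \<notin> B" using same b \<open>x \<in> b\<close> False by blast
        ultimately show ?thesis by (simp add: block_partition_def)
      qed (simp add: block_partition_def)
    qed
    show "block_partition X B \<subseteq> \<pi>"
    proof
      fix b assume "b \<in> block_partition X B"
      then consider "b = B" | x where "x \<in> X" "x \<notin> B" "b = {x}"
        by (auto simp: block_partition_def)
      then show "b \<in> \<pi>"
      proof cases
        case 2
        then obtain c where c: "c \<in> \<pi>" "x \<in> c" using U by blast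
        with 2 have "c \<noteq> B" by blast
        with c 2 show ?thesis using singleton by metis
      qed (use B in simp)
    qed
  qed
qed

lemma sum_Pow_block_partition:
  assumes "finite X"
  shows "sum f (Pow (block_partition X B)) =
     (\<Sum>C\<in>Pow (X - B). f ((\<lambda>x. {x}) ` C)) + (\<Sum>C\<in>Pow (X - B). f (insert B ((\<lambda>x. {x}) ` C)))"
proof -
  let ?A = "(\<lambda>x. {x}) ` (X - B)"
  have B_notin: "B \<notin> D" if "D \<subseteq> ?A" for D using that by auto
  have bij: "bij_betw (image (\<lambda>x. {x})) (Pow (X - B)) (Pow ?A)"
    by (intro bij_betw_image_Pow) (simp add: bij_betw_def inj_on_def)
  have "sum f (Pow (block_partition X B)) = sum f (Pow ?A) + sum f (insert B ` Pow ?A)"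
    unfolding block_partition_def Pow_insert using B_notin assms
    by (intro sum.union_disjoint) auto
  also have "sum f (insert B ` Pow ?A) = (\<Sum>D\<in>Pow ?A. f (insert B D))"
    using B_notin by (intro sum.reindex[unfolded comp_def] inj_onI) (metis PowD insert_ident)
  also have "sum f (Pow ?A) = (\<Sum>C\<in>Pow (X - B). f ((\<lambda>x. {x}) ` C))"
    by (rule sum.reindex_bij_betw[OF bij, symmetric])
  also have "(\<Sum>D\<in>Pow ?A. f (insert B D)) = (\<Sum>C\<in>Pow (X - B). f (insert B ((\<lambda>x. {x}) ` C)))"
    by (rule sum.reindex_bij_betw[OF bij, symmetric])
  finally show ?thesis .
qed

lemma Rset_singletons: "finite X \<Longrightarrow> Rset r (prod g) c ((\<lambda>x. {x}) ` X) = Rset r g c X"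
  by (simp add: Rset_reindex inj_on_def comp_def)

lemma Rset_block_partition_alternating_sum:
  fixes g :: "'a \<Rightarrow> 'b::comm_ring_1"
  assumes "r c 0 = 1" "finite X" "B \<subseteq> X"
  shows "(\<Sum>C\<in>Pow (X - B). (-1) ^ card C * r c (card C) *
            Rset r (prod g) (c * prod g C) (block_partition (X - C) B)) =
         (\<Sum>C\<in>Pow (X - B). (-1) ^ card C * r c (card C + 1) *
            Rset r g (c * prod g (B \<union> C)) (X - (B \<union> C)))"
proof -
  let ?s = "\<lambda>C. (\<lambda>x. {x}) ` C"
  define M where "M = block_partition X B"
  define t where "t D = (-1) ^ card D * r c (card D) * Rset r (prod g) (c * prod (prod g) D) (M - D)" for D
  have singletons: "t (?s C) = (-1) ^ card C * r c (card C) * Rset r (prod g) (c * prod g C) (block_partition (X - C) B)"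
    if "C \<subseteq> X - B" for C
  proof -
    have "M - ?s C = block_partition (X - C) B" using that by (auto simp: M_def block_partition_def)
    then show ?thesis by (simp add: t_def card_image prod.reindex inj_on_def)
  qed
  have with_block: "t (insert B (?s C)) =
      - ((-1) ^ card C * r c (card C + 1) * Rset r g (c * prod g (B \<union> C)) (X - (B \<union> C)))"
    if "C \<subseteq> X - B" for C
  proof -
    have fin: "finite C" "finite B" and "B \<notin> ?s C" using that assms(2,3) by (auto intro: finite_subset)
    then have "card (insert B (?s C)) = card C + 1" "prod (prod g) (insert B (?s C)) = prod g B * prod g C"
      by (simp_all add: card_image prod.reindex inj_on_def)
    moreover have "prod g B * prod g C = prod g (B \<union> C)"
      by (rule prod.union_disjoint[symmetric]) (use that fin in auto)
    moreover have "M - insert B (?s C) = ?s (X - (B \<union> C))"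
      using that by (auto simp: M_def block_partition_def)
    ultimately show ?thesis
      using assms(2) by (simp add: t_def Rset_singletons)
  qed
  have "sum t (Pow M) = 0"
    unfolding t_def using assms Rset_alternating_sum[of r c M "prod g"] by (simp add: M_def block_partition_def)
  then show ?thesis
    unfolding M_def sum_Pow_block_partition[OF assms(2)]
    by (simp add: singletons with_block sum_negf add_eq_0_iff M_def[symmetric])
qed

(* The right-hand side of the theorem, for an arbitrary distinguished index a in place of 1. *)
definition Rcirc :: "('b::comm_ring_1 \<Rightarrow> nat \<Rightarrow> 'b) \<Rightarrow> ('a \<Rightarrow> 'b) \<Rightarrow> 'a \<Rightarrow> 'b \<Rightarrow> 'a set \<Rightarrow> 'b" where
  "Rcirc r g a c X = (\<Sum>B | a \<in> B \<and> B \<subseteq> X. (-1) ^ (card B + 1) * Rset r (prod g) c (block_partition X B))"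

lemma sum_blocks_avoiding:
  fixes g :: "'a \<Rightarrow> 'b::comm_ring_1"
  assumes "r c 0 = 1" "finite Y"
  shows "(\<Sum>S | a \<notin> S \<and> S \<subseteq> Y. (-1) ^ card S * r c (card S) * Rcirc r g a (c * prod g S) (Y - S)) =
         - (\<Sum>B | a \<in> B \<and> B \<subseteq> Y. \<Sum>C\<in>Pow (Y - B).
            (-1) ^ card (B \<union> C) * r c (card C + 1) * Rset r g (c * prod g (B \<union> C)) (Y - (B \<union> C)))"
proof -
  have "(\<Sum>S | a \<notin> S \<and> S \<subseteq> Y. (-1) ^ card S * r c (card S) * Rcirc r g a (c * prod g S) (Y - S)) =
        (\<Sum>B | a \<in> B \<and> B \<subseteq> Y. \<Sum>S | a \<notin> S \<and> S \<subseteq> Y - B. (-1) ^ (card B + 1) *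
            ((-1) ^ card S * r c (card S) * Rset r (prod g) (c * prod g S) (block_partition (Y - S) B)))"
    unfolding Rcirc_def sum_distrib_left by (subst sum_disjoint_subsets_swap[OF assms(2)]) (simp add: mult_ac)
  also have "\<dots> = (\<Sum>B | a \<in> B \<and> B \<subseteq> Y. (-1) ^ (card B + 1) * (\<Sum>C\<in>Pow (Y - B).
            (-1) ^ card C * r c (card C + 1) * Rset r g (c * prod g (B \<union> C)) (Y - (B \<union> C))))"
  proof (intro sum.cong refl)
    fix B assume B: "B \<in> {B. a \<in> B \<and> B \<subseteq> Y}"
    then have "{S. a \<notin> S \<and> S \<subseteq> Y - B} = Pow (Y - B)" by auto
    then show "(\<Sum>S | a \<notin> S \<and> S \<subseteq> Y - B. (-1) ^ (card B + 1) *
            ((-1) ^ card S * r c (card S) * Rset r (prod g) (c * prod g S) (block_partition (Y - S) B))) =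
        (-1) ^ (card B + 1) * (\<Sum>C\<in>Pow (Y - B).
            (-1) ^ card C * r c (card C + 1) * Rset r g (c * prod g (B \<union> C)) (Y - (B \<union> C)))"
      using Rset_block_partition_alternating_sum[of r c Y B g] assms B by (simp only: sum_distrib_left[symmetric]) simp
  qed
  also have "\<dots> = - (\<Sum>B | a \<in> B \<and> B \<subseteq> Y. \<Sum>C\<in>Pow (Y - B).
            (-1) ^ card (B \<union> C) * r c (card C + 1) * Rset r g (c * prod g (B \<union> C)) (Y - (B \<union> C)))"
    using assms(2) by (simp add: sum_distrib_left sum_negf[symmetric] card_Un_subset_Diff power_add mult_ac)
  finally show ?thesis .
qed

section \<open>Scaling by \<open>q\<close>\<close>

context
  fixes r :: "'b::idom \<Rightarrow> nat \<Rightarrow> 'b" and q :: 'b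
  assumes r_zero: "\<And>x. x \<noteq> 0 \<Longrightarrow> r x 0 = 1"
    and r_shift: "\<And>x m. x \<noteq> 0 \<Longrightarrow> r (q * x) m = (\<Sum>i=0..m. (-1) ^ i * of_nat (m choose i) * r x (m - i))"
begin

lemma r_shift_Pow:
  assumes "c \<noteq> 0" "finite B"
  shows "(-1) ^ card B * r (q * c) (card B) = (\<Sum>V\<in>Pow B. (-1) ^ card V * r c (card V))"
proof -
  let ?m = "card B"
  have sign: "(-1 :: 'b) ^ (?m + (?m - k)) = (-1) ^ k" if "k \<le> ?m" for k
  proof -
    have "?m + (?m - k) = k + 2 * (?m - k)" using that by simp
    then show ?thesis by (simp only: power_add power_mult) simp
  qed
  have "(-1) ^ ?m * r (q * c) ?m = (\<Sum>i=0..?m. (-1) ^ (?m + i) * of_nat (?m choose i) * r c (?m - i))"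
    unfolding r_shift[OF assms(1)] sum_distrib_left by (simp add: power_add mult_ac)
  also have "\<dots> = (\<Sum>k=0..?m. (-1) ^ (?m + (?m - k)) * of_nat (?m choose (?m - k)) * r c k)"
    by (subst sum.atLeastAtMost_rev) (auto intro!: sum.cong)
  also have "\<dots> = (\<Sum>k\<le>?m. of_nat (?m choose k) * ((-1) ^ k * r c k))"
    unfolding atLeast0AtMost
  proof (rule sum.cong[OF refl])
    fix k assume "k \<in> {..?m}"
    then show "(-1) ^ (?m + (?m - k)) * of_nat (?m choose (?m - k)) * r c k = of_nat (?m choose k) * ((-1) ^ k * r c k)"
      using sign[of k] binomial_symmetric[of k ?m] by simp
  qed
  also have "\<dots> = (\<Sum>V\<in>Pow B. (-1) ^ card V * r c (card V))"
    by (rule sum_Pow_card[OF assms(2), symmetric])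
  finally show ?thesis .
qed

lemma Rset_scale_base:
  assumes "finite X" "c \<noteq> 0" "\<And>x. x \<in> X \<Longrightarrow> g x \<noteq> 0"
  shows "Rset r g (q * c) X = (\<Sum>Y\<in>Pow X. (-1) ^ card Y * Rset r g (c * prod g Y) (X - Y))"
proof -
  define F where "F c' Y = (\<Sum>Z\<in>Pow Y. (-1) ^ card Z * Rset r g (c' * prod g Z) (Y - Z))" for c' Y
  have "F c X = Rset (\<lambda>x. r (q * x)) g c X"
  proof (rule Rset_unique[OF assms(1)])
    show "r (q * c') 0 = 1" if "c' \<noteq> 0" for c'
      using r_shift[OF that, of 0] r_zero[OF that] by simp
    show "F c' {} = 1" for c'
      by (simp add: F_def)
    show "(\<Sum>B\<in>Pow Y. (-1) ^ card B * r (q * c') (card B) * F (c' * prod g B) (Y - B)) = 0"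
      if "c' \<noteq> 0" "Y \<subseteq> X" "Y \<noteq> {}" for c' Y
    proof -
      have Y: "finite Y" using that(2) assms(1) by (rule finite_subset)
      have inversion: "(\<Sum>B | V \<subseteq> B \<and> B \<subseteq> Y. F (c' * prod g B) (Y - B)) = Rset r g (c' * prod g V) (Y - V)"
        if "V \<subseteq> Y" for V
        unfolding F_def using Rset_sum_supsets[OF Y that] by simp
      have "(\<Sum>B\<in>Pow Y. (-1) ^ card B * r (q * c') (card B) * F (c' * prod g B) (Y - B)) =
          (\<Sum>B\<in>Pow Y. \<Sum>V\<in>Pow B. (-1) ^ card V * r c' (card V) * F (c' * prod g B) (Y - B))"
        using Y by (intro sum.cong refl) (simp add: r_shift_Pow[OF that(1)] sum_distrib_right finite_subset)
      also have "\<dots> = (\<Sum>V\<in>Pow Y. (-1) ^ card V * r c' (card V) *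
                          (\<Sum>B | V \<subseteq> B \<and> B \<subseteq> Y. F (c' * prod g B) (Y - B)))"
        by (simp add: sum_Pow_swap_subset[OF Y] sum_distrib_left)
      also have "\<dots> = (\<Sum>V\<in>Pow Y. (-1) ^ card V * r c' (card V) * Rset r g (c' * prod g V) (Y - V))"
        by (intro sum.cong refl) (simp add: inversion)
      also have "\<dots> = 0"
        using Rset_alternating_sum[of r c' Y g] r_zero[OF that(1)] Y that(3) by simp
      finally show ?thesis .
    qed
  qed (use assms in auto)
  moreover have "Rset (\<lambda>x. r (q * x)) g c X = Rset r g (q * c) X"
    by (simp add: Rset_def mult.assoc)
  ultimately show ?thesis
    by (simp add: F_def)
qed

lemma sum_blocks_containing:
  assumes "finite Y" "c \<noteq> 0" "\<And>x. x \<in> Y \<Longrightarrow> g x \<noteq> 0"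
  shows "(\<Sum>S | a \<in> S \<and> S \<subseteq> Y. (-1) ^ card S * r c (card S) * Rset r g (q * (c * prod g S)) (Y - S)) =
         (\<Sum>S | a \<in> S \<and> S \<subseteq> Y. \<Sum>C\<in>Pow (Y - S).
            (-1) ^ card (S \<union> C) * r c (card S) * Rset r g (c * prod g (S \<union> C)) (Y - (S \<union> C)))"
proof -
  have "Rset r g (q * (c * prod g S)) (Y - S) = (\<Sum>C\<in>Pow (Y - S).
          (-1) ^ card C * Rset r g (c * prod g (S \<union> C)) (Y - (S \<union> C)))"
    if "S \<subseteq> Y" for S
  proof -
    have "finite S" using that assms(1) by (rule finite_subset)
    then have "c * prod g S \<noteq> 0" using that assms by auto
    then have "Rset r g (q * (c * prod g S)) (Y - S) = (\<Sum>C\<in>Pow (Y - S).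
        (-1) ^ card C * Rset r g (c * prod g S * prod g C) (Y - S - C))"
      using assms by (intro Rset_scale_base) auto
    then show ?thesis
      using that assms(1) by (simp add: Rset_shift_union)
  qed
  then show ?thesis
    using assms(1) by (simp add: sum_distrib_left card_Un_subset_Diff power_add mult_ac)
qed

lemma Rcirc_alternating_sum:
  assumes "finite Y" "c \<noteq> 0" "\<And>x. x \<in> Y \<Longrightarrow> g x \<noteq> 0"
  shows "(\<Sum>S | a \<notin> S \<and> S \<subseteq> Y. (-1) ^ card S * r c (card S) * Rcirc r g a (c * prod g S) (Y - S)) +
         (\<Sum>S | a \<in> S \<and> S \<subseteq> Y. (-1) ^ card S * r c (card S) * Rset r g (q * (c * prod g S)) (Y - S)) = 0"
  using sum_blocks_avoiding[where r = r and c = c and Y = Y and a = a and g = g] r_zero[OF assms(2)] assms(1)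
    sum_blocks_containing[OF assms, where a = a]
    sum_marked_pairs_swap[OF assms(1), where a = a and f = "\<lambda>k Z. (-1) ^ card Z * r c k * Rset r g (c * prod g Z) (Y - Z)"]
  by simp

lemma Rset_scale_variable:
  assumes "q \<noteq> 0" "finite X" "a \<in> X" "c \<noteq> 0" "\<And>x. x \<in> X \<Longrightarrow> g x \<noteq> 0"
  shows "Rset r (g(a := q * g a)) c X = Rcirc r g a c X"
proof -
  let ?g = "g(a := q * g a)"
  \<comment> \<open>away from \<open>a\<close> the scaling has no effect, so there the right-hand side is \<open>R\<close> itself\<close>
  define F where "F c' Y = (if a \<in> Y then Rcirc r g a c' Y else Rset r g c' Y)" for c' Y
  have "F c X = Rset r ?g c X"
  proof (rule Rset_unique[OF assms(2)])
    show "F c' {} = 1" for c'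
      by (simp add: F_def)
    show "(\<Sum>S\<in>Pow Y. (-1) ^ card S * r c' (card S) * F (c' * prod ?g S) (Y - S)) = 0"
      if "c' \<noteq> 0" "Y \<subseteq> X" "Y \<noteq> {}" for c' Y
    proof -
      have Y: "finite Y" using that(2) assms(2) by (rule finite_subset)
      have prod_avoiding: "prod ?g S = prod g S" if "a \<notin> S" for S
        using that by (intro prod.cong) auto
      let ?t = "\<lambda>S. (-1) ^ card S * r c' (card S) * F (c' * prod ?g S) (Y - S)"
      show ?thesis
      proof (cases "a \<in> Y")
        case True
        have "sum ?t (Pow Y) =
            (\<Sum>S | a \<notin> S \<and> S \<subseteq> Y. (-1) ^ card S * r c' (card S) * Rcirc r g a (c' * prod g S) (Y - S)) +
            (\<Sum>S | a \<in> S \<and> S \<subseteq> Y. (-1) ^ card S * r c' (card S) * Rset r g (q * (c' * prod g S)) (Y - S))"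
          unfolding sum_Pow_split_mem[OF Y, where a = a]
        proof (intro arg_cong2[where f = "(+)"] sum.cong refl)
          fix S assume "S \<in> {S. a \<notin> S \<and> S \<subseteq> Y}"
          then have "a \<notin> S" "a \<in> Y - S" using True by auto
          then show "?t S = (-1) ^ card S * r c' (card S) * Rcirc r g a (c' * prod g S) (Y - S)"
            unfolding F_def prod_avoiding[OF \<open>a \<notin> S\<close>] by simp
        next
          fix S assume "S \<in> {S. a \<in> S \<and> S \<subseteq> Y}"
          then have "a \<in> S" "finite S" using Y by (auto intro: finite_subset)
          then show "?t S = (-1) ^ card S * r c' (card S) * Rset r g (q * (c' * prod g S)) (Y - S)"
            unfolding F_def prod_fun_upd_scale[OF \<open>finite S\<close> \<open>a \<in> S\<close>] by (simp add: mult.left_commute)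
        qed
        also have "\<dots> = 0"
          by (rule Rcirc_alternating_sum[OF Y that(1)]) (use that(2) assms(5) in auto)
        finally show ?thesis .
      next
        case False
        have "F (c' * prod ?g S) (Y - S) = Rset r g (c' * prod g S) (Y - S)" if "S \<subseteq> Y" for S
        proof -
          have "a \<notin> S" using that False by auto
          then show ?thesis unfolding F_def prod_avoiding[OF \<open>a \<notin> S\<close>] using False by simp
        qed
        then show ?thesis
          using Rset_alternating_sum[of r c' Y g] r_zero[OF that(1)] Y that(3) by simp
      qed
    qed
  qed (use assms r_zero in auto)
  then show ?thesis
    using assms(3) by (simp add: F_def)
qed

end

lemma set_partitions_circ_eq:
  assumes "n \<ge> 1"
  shows "set_partitions_circ n = block_partition {1..n} ` {B. 1 \<in> B \<and> B \<subseteq> {1..n}}"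
proof (intro equalityI subsetI)
  fix \<pi> assume "\<pi> \<in> set_partitions_circ n"
  then have P: "partition_on {1..n} \<pi>" and big: "\<And>b. b \<in> \<pi> \<Longrightarrow> card b > 1 \<Longrightarrow> 1 \<in> b"
    by (auto simp: set_partitions_circ_def set_partitions_def)
  then have U: "\<Union>\<pi> = {1..n}" and dj: "disjoint \<pi>"
    by (auto simp: partition_on_def)
  obtain B where B: "B \<in> \<pi>" "1 \<in> B" using U assms by (metis UnionE atLeastAtMost_iff order_refl)
  have "card b \<le> 1" if "b \<in> \<pi>" "b \<noteq> B" for b
  proof (rule ccontr)
    assume "\<not> card b \<le> 1"
    then have "1 \<in> b" using big that(1) by simp
    then show False using dj that B by (auto simp: pairwise_def disjnt_def)
  qed
  then have "\<pi> = block_partition {1..n} B"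
    using P B(1) by (intro partition_eq_block_partition) auto
  moreover have "B \<subseteq> {1..n}" using B(1) U by blast
  ultimately show "\<pi> \<in> block_partition {1..n} ` {B. 1 \<in> B \<and> B \<subseteq> {1..n}}"
    using B(2) by blast
next
  fix \<pi> assume "\<pi> \<in> block_partition {1..n} ` {B. 1 \<in> B \<and> B \<subseteq> {1..n}}"
  then obtain B where B: "1 \<in> B" "B \<subseteq> {1..n}" and \<pi>: "\<pi> = block_partition {1..n} B" by auto
  have "b = B" if "b \<in> \<pi>" "card b > 1" for b
    using that by (auto simp: \<pi> block_partition_def)
  moreover have "partition_on {1..n} \<pi>"
    unfolding \<pi> using B by (intro partition_on_block_partition) auto
  ultimately show "\<pi> \<in> set_partitions_circ n"
    using B(1) by (auto simp: set_partitions_circ_def set_partitions_def)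
qed

lemma Rfun_eq_Rset: "Rfun r n t t0 = Rset r t t0 {1..n}"
proof -
  have prod_insert_0: "(\<Prod>i\<in>insert 0 U. if i = 0 then t0 else t i) = t0 * prod t U" if "U \<subseteq> {1..n}" for U
  proof -
    have "0 \<notin> U" "finite U" using that by (auto intro: finite_subset)
    then show ?thesis by (auto intro!: prod.cong)
  qed
  have "compositions n = compositions_of {1..n}"
    by (simp add: compositions_def compositions_of_def)
  then show ?thesis
    unfolding Rfun_def Rset_def
    by (simp add: prod_insert_0 Union_take_composition_subset)
qed

(* The facts of folding_insort_key are stated for linorder.sorted_key_list_of_set (\<le>),
   a different term from the class constant used in Rpart. *)
lemma linorder_insort_key_eq: "linorder.insort_key (\<le>) = (insort_key :: ('b \<Rightarrow> 'a::linorder) \<Rightarrow> _)"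
proof (intro ext)
  fix f :: "'b \<Rightarrow> 'a" and x xs
  show "linorder.insort_key (\<le>) f x xs = insort_key f x xs"
    by (induction xs) (simp_all add: linorder.insort_key.simps[OF linorder_class.linorder_axioms])
qed

lemma linorder_sorted_key_list_of_set_eq:
  "linorder.sorted_key_list_of_set (\<le>) = (sorted_key_list_of_set :: ('b \<Rightarrow> 'a::linorder) \<Rightarrow> _)"
  by (intro ext) (simp add: linorder.sorted_key_list_of_set_def[OF linorder_class.linorder_axioms]
      sorted_key_list_of_set_def linorder_insort_key_eq)

lemma Rpart_eq_Rset:
  assumes P: "partition_on {1..n} \<pi>"
  shows "Rpart r \<pi> t t0 = Rset r (prod t) t0 \<pi>"
proof -
  have fin: "finite \<pi>" using finite_elements[OF _ P] by simp
  have "inj_on Min \<pi>"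
  proof (rule inj_onI)
    fix b1 b2 assume b: "b1 \<in> \<pi>" "b2 \<in> \<pi>" "Min b1 = Min b2"
    then have "b1 \<noteq> {}" "b2 \<noteq> {}" "finite b1" "finite b2"
      using P by (auto simp: partition_on_def intro: finite_subset)
    then have "Min b1 \<in> b1 \<inter> b2" using b(3) Min_in by fastforce
    then show "b1 = b2" using P b(1,2) by (auto simp: partition_on_def pairwise_def disjnt_def)
  qed
  then interpret folding_insort_key "(\<le>)" "(<)" \<pi> Min
    rewrites "linorder.sorted_key_list_of_set (\<le>) = sorted_key_list_of_set"
    by unfold_locales (simp_all add: linorder_sorted_key_list_of_set_eq)
  define bs where "bs = sorted_key_list_of_set Min \<pi>"
  have "distinct bs" "set bs = \<pi>" "length bs = card \<pi>"
    using fin by (simp_all add: bs_def distinct_if_distinct_map)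
  then have "bij_betw ((!) bs \<circ> (\<lambda>j. j - 1)) {1..card \<pi>} \<pi>"
    by (intro bij_betw_trans[where B = "{..<card \<pi>}"] bij_betw_nth)
       (auto intro!: bij_betw_byWitness[where f' = Suc])
  then have "Rset r (prod t \<circ> ((!) bs \<circ> (\<lambda>j. j - 1))) t0 {1..card \<pi>} = Rset r (prod t) t0 \<pi>"
    by (simp add: Rset_reindex[symmetric] bij_betw_def)
  then show ?thesis
    by (simp add: Rpart_def bs_def Rfun_eq_Rset comp_def)
qed

lemma Rcirc_eq_sum_Rpart:
  assumes "n \<ge> 1"
  shows "Rcirc r t 1 t0 {1..n} = (\<Sum>\<pi>\<in>set_partitions_circ n. (-1) ^ (n + card \<pi>) * Rpart r \<pi> t t0)"
proof -
  let ?A = "{B. 1 \<in> B \<and> B \<subseteq> {1..n}}"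
  have "Rcirc r t 1 t0 {1..n} =
      (\<Sum>B\<in>?A. (-1) ^ (n + card (block_partition {1..n} B)) * Rpart r (block_partition {1..n} B) t t0)"
    unfolding Rcirc_def
  proof (rule sum.cong[OF refl])
    fix B assume B: "B \<in> ?A"
    then have "finite B" "card B \<le> n" using card_mono[of "{1..n}" B] by (auto intro: finite_subset)
    then have "n + card (block_partition {1..n} B) = (card B + 1) + 2 * (n - card B)"
      using B by (simp add: card_block_partition card_Diff_subset)
    moreover have "partition_on {1..n} (block_partition {1..n} B)"
      using B by (intro partition_on_block_partition) auto
    ultimately show "(-1) ^ (card B + 1) * Rset r (prod t) t0 (block_partition {1..n} B) =
        (-1) ^ (n + card (block_partition {1..n} B)) * Rpart r (block_partition {1..n} B) t t0"
      by (simp add: Rpart_eq_Rset power_add power_mult)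
  qed
  also have "\<dots> = (\<Sum>\<pi>\<in>set_partitions_circ n. (-1) ^ (n + card \<pi>) * Rpart r \<pi> t t0)"
    unfolding set_partitions_circ_eq[OF assms]
    by (rule sum.reindex[symmetric, unfolded comp_def]) (rule inj_on_subset[OF inj_on_block_partition]; blast)
  finally show ?thesis .
qed

theorem theorem10p1:
  fixes q t0 :: complex and r :: "complex \<Rightarrow> nat \<Rightarrow> complex"
    and t :: "nat \<Rightarrow> complex" and n :: nat
  assumes hq: "q \<noteq> 0"
    and hr0: "\<And>x. x \<noteq> 0 \<Longrightarrow> r x 0 = 1"
    and hrq: "\<And>x m. x \<noteq> 0 \<Longrightarrow>
               r (q * x) m = (\<Sum>i=0..m. (-1) ^ i * of_nat (m choose i) * r x (m - i))"
    and hn: "n \<ge> 1"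
    and ht0: "t0 \<noteq> 0"
    and ht: "\<And>i. 1 \<le> i \<Longrightarrow> i \<le> n \<Longrightarrow> t i \<noteq> 0"
  shows "Rfun r n (t(1 := q * t 1)) t0 =
         (\<Sum>\<pi>\<in>set_partitions_circ n. (-1) ^ (n + card \<pi>) * Rpart r \<pi> t t0)"
proof -
  have "Rfun r n (t(1 := q * t 1)) t0 = Rset r (t(1 := q * t 1)) t0 {1..n}"
    by (rule Rfun_eq_Rset)
  also have "\<dots> = Rcirc r t 1 t0 {1..n}"
    by (rule Rset_scale_variable[where r = r and q = q, OF hr0 hrq]) (use hq hn ht0 ht in auto)
  also have "\<dots> = (\<Sum>\<pi>\<in>set_partitions_circ n. (-1) ^ (n + card \<pi>) * Rpart r \<pi> t t0)"
    by (rule Rcirc_eq_sum_Rpart[OF hn])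
  finally show ?thesis .
qed

end
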